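(* Let $x\in\mathbb{R}^n$. If $u\in\partial\|\cdot\|_{1,2}(Lx)$ (the subdifferential of $\|\cdot\|_{1,2}$ at $Lx$), then $P_{T_L^\perp}P_{T_z}u=0$.
   Context: Let $n,N\in\mathbb{N}$, let $G_1,\dots,G_N\subseteq\{1,\dots,n\}$ be nonempty groups, possibly overlapping, with $\bigcup_iG_i=\{1,\dots,n\}$, and weights $w_i>0$. $x_G$ is the subvector of $x$ indexed by $G$ (increasing order). Let $p=\sum_i|G_i|$, partition $\{1,\dots,p\}$ into consecutive blocks $J_i=\{\sum_{j<i}|G_j|+1,\dots,\sum_{j\le i}|G_j|\}$, and define $L\in\mathbb{R}^{p\times n}$ by $(Lx)_{J_i}=w_ix_{G_i}$. For $z\in\mathbb{R}^p$, $\|z\|_{1,2}=\sum_i\|z_{J_i}\|$ (Euclidean); $u\in\partial\|\cdot\|_{1,2}(z)$ iff $u_{J_i}=z_{J_i}/\|z_{J_i}\|$ when $z_{J_i}\ne0$ and $\|u_{J_i}\|\le1$ when $z_{J_i}=0$. For $x\in\mathbb{R}^n$: $\mathcal{I}_x=\{t:x_{G_t}\ne0\}$; $\mathcal{E}_x=\{1,\dots,n\}\setminus\bigcup_{t\notin\mathcal{I}_x}G_t$, $T_x=\{x':\mathrm{supp}(x')\subseteq\mathcal{E}_x\}$; $\mathcal{E}_z=\bigcup_{t\in\mathcal{I}_x}J_t$, $T_z=\{z':\mathrm{supp}(z')\subseteq\mathcal{E}_z\}$; $\mathcal{E}_L=\mathrm{supp}(LP_{T_x}\mathbf{1}_n)$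 with $\mathbf{1}_n$ the all-ones vector, $T_L=\{z':\mathrm{supp}(z')\subseteq\mathcal{E}_L\}$. $P_T$ is the orthogonal (coordinate) projection onto $T$ and $T^\perp$ its orthogonal complement. *)

theory Defs
  imports Complex_Main
begin

(* Vectors in R^n / R^p are functions nat => real, coordinates indexed 1..n / 1..p.
   Groups G 1 .. G N, weights w 1 .. w N. *)

definition offs :: "(nat \<Rightarrow> nat set) \<Rightarrow> nat \<Rightarrow> nat" where
  "offs G i = (\<Sum>j\<in>{1..<i}. card (G j))"

definition blk :: "(nat \<Rightarrow> nat set) \<Rightarrow> nat \<Rightarrow> nat set" where
  "blk G i = {offs G i + 1 .. offs G i + card (G i)}"

definition pdim :: "nat \<Rightarrow> (nat \<Rightarrow> nat set) \<Rightarrow> nat" where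
  "pdim N G = (\<Sum>i\<in>{1..N}. card (G i))"

definition Lop :: "nat \<Rightarrow> (nat \<Rightarrow> nat set) \<Rightarrow> (nat \<Rightarrow> real) \<Rightarrow> (nat \<Rightarrow> real) \<Rightarrow> (nat \<Rightarrow> real)" where
  "Lop N G w x = (\<lambda>k. \<Sum>i\<in>{1..N}. if k \<in> blk G i
      then w i * x (sorted_list_of_set (G i) ! (k - offs G i - 1)) else 0)"

definition blocknorm :: "(nat \<Rightarrow> nat set) \<Rightarrow> nat \<Rightarrow> (nat \<Rightarrow> real) \<Rightarrow> real" where
  "blocknorm G i z = sqrt (\<Sum>k\<in>blk G i. (z k)\<^sup>2)"

(* u \<in> \<partial>||.||_{1,2}(z), as characterised in the paper *)
definition in_subdiff_12 :: "nat \<Rightarrow> (nat \<Rightarrow> nat set) \<Rightarrow> (nat \<Rightarrow> real) \<Rightarrow> (nat \<Rightarrow> real) \<Rightarrow> bool" where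
  "in_subdiff_12 N G z u \<longleftrightarrow> (\<forall>i\<in>{1..N}.
      ((\<exists>k\<in>blk G i. z k \<noteq> 0) \<longrightarrow> (\<forall>k\<in>blk G i. u k = z k / blocknorm G i z)) \<and>
      ((\<forall>k\<in>blk G i. z k = 0) \<longrightarrow> blocknorm G i u \<le> 1))"

(* coordinate projection onto {v. supp v \<subseteq> S} *)
definition cproj :: "nat set \<Rightarrow> (nat \<Rightarrow> real) \<Rightarrow> (nat \<Rightarrow> real)" where
  "cproj S v = (\<lambda>k. if k \<in> S then v k else 0)"

definition Iset :: "nat \<Rightarrow> (nat \<Rightarrow> nat set) \<Rightarrow> (nat \<Rightarrow> real) \<Rightarrow> nat set" where
  "Iset N G x = {t\<in>{1..N}. \<exists>j\<in>G t. x j \<noteq> 0}"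

definition Exs :: "nat \<Rightarrow> nat \<Rightarrow> (nat \<Rightarrow> nat set) \<Rightarrow> (nat \<Rightarrow> real) \<Rightarrow> nat set" where
  "Exs n N G x = {1..n} - (\<Union>t\<in>{1..N} - Iset N G x. G t)"

definition Ezs :: "nat \<Rightarrow> (nat \<Rightarrow> nat set) \<Rightarrow> (nat \<Rightarrow> real) \<Rightarrow> nat set" where
  "Ezs N G x = (\<Union>t\<in>Iset N G x. blk G t)"

definition ELs :: "nat \<Rightarrow> nat \<Rightarrow> (nat \<Rightarrow> nat set) \<Rightarrow> (nat \<Rightarrow> real) \<Rightarrow> (nat \<Rightarrow> real) \<Rightarrow> nat set" where
  "ELs n N G w x = {k\<in>{1..pdim N G}. Lop N G w (cproj (Exs n N G x) (\<lambda>_. 1)) k \<noteq> 0}"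

end

theory Submission
  imports Defs
begin

text \<open>If a block \<open>J\<^sub>t\<close> with \<open>t \<in> I\<^sub>x\<close> meets the complement of \<open>E\<^sub>L\<close> in position \<open>k\<close>, then the
  coordinate \<open>g \<in> G\<^sub>t\<close> feeding position \<open>k\<close> lies outside \<open>E\<^sub>x\<close> (as \<open>w\<^sub>t > 0\<close>), hence in an
  inactive group, so \<open>x\<^sub>g = 0\<close> and \<open>(Lx)\<^sub>k = 0\<close>. Since the block \<open>(Lx)\<^sub>J\<^sub>t\<close> is nonzero, the
  subgradient on it is \<open>(Lx)\<^sub>J\<^sub>t / \<parallel>(Lx)\<^sub>J\<^sub>t\<parallel>\<close>, which vanishes at \<open>k\<close>. The
  groups need not cover \<open>{1..n}\<close> nor be nonempty for this argument.\<close>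

definition blk_coord :: "(nat \<Rightarrow> nat set) \<Rightarrow> nat \<Rightarrow> nat \<Rightarrow> nat" where
  "blk_coord G t k = sorted_list_of_set (G t) ! (k - offs G t - 1)"

lemma offs_add_card_le_offs:
  assumes "1 \<le> i" "i < j"
  shows "offs G i + card (G i) \<le> offs G j"
proof -
  have "offs G i + card (G i) = (\<Sum>l\<in>{1..<Suc i}. card (G l))"
    unfolding offs_def using assms(1) by simp
  also have "\<dots> \<le> (\<Sum>l\<in>{1..<j}. card (G l))"
    by (rule sum_mono2) (use assms in auto)
  finally show ?thesis unfolding offs_def .
qed

lemma blk_disjoint:
  assumes "1 \<le> i" "1 \<le> j" "i \<noteq> j"
  shows "blk G i \<inter> blk G j = {}"
proof (cases "i < j")
  case True
  then show ?thesis using assms offs_add_card_le_offs[of i j G] by (auto simp: blk_def)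
next
  case False
  then have "j < i" using assms by auto
  then show ?thesis using assms offs_add_card_le_offs[of j i G] by (auto simp: blk_def)
qed

lemma Lop_on_blk:
  assumes "t \<in> {1..N}" "k \<in> blk G t"
  shows "Lop N G w f k = w t * f (blk_coord G t k)"
proof -
  have "Lop N G w f k = (\<Sum>i\<in>{1..N}. if i = t then w i * f (blk_coord G i k) else 0)"
    unfolding Lop_def blk_coord_def
    by (rule sum.cong[OF refl]) (use assms blk_disjoint[of t _ G] in auto)
  then show ?thesis using assms(1) by simp
qed

lemma blk_coord_mem:
  assumes "finite (G t)" "k \<in> blk G t"
  shows "blk_coord G t k \<in> G t"
proof -
  have "k - offs G t - 1 < length (sorted_list_of_set (G t))"
    using assms by (auto simp: blk_def)
  then show ?thesis
    unfolding blk_coord_def using assms(1) by (metis nth_mem set_sorted_list_of_set)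
qed

lemma blk_coord_surj:
  assumes "finite (G t)" "j \<in> G t"
  obtains k where "k \<in> blk G t" "blk_coord G t k = j"
proof -
  obtain m where m: "m < card (G t)" "sorted_list_of_set (G t) ! m = j"
    using assms by (metis in_set_conv_nth length_sorted_list_of_set set_sorted_list_of_set)
  show ?thesis
    by (rule that[of "offs G t + 1 + m"]) (use m in \<open>auto simp: blk_def blk_coord_def\<close>)
qed

lemma Lop_blk_nonzero_if_active:
  assumes "t \<in> Iset N G x" "finite (G t)" "w t \<noteq> 0"
  shows "\<exists>k\<in>blk G t. Lop N G w x k \<noteq> 0"
proof -
  obtain j where j: "j \<in> G t" "x j \<noteq> 0" "t \<in> {1..N}"
    using assms(1) unfolding Iset_def by auto
  obtain k where "k \<in> blk G t" "blk_coord G t k = j"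
    using blk_coord_surj[of G t j] assms(2) j(1) by blast
  then show ?thesis using Lop_on_blk[OF j(3)] j assms(3) by auto
qed

lemma eq_0_outside_Exs:
  assumes "j \<in> {1..n}" "j \<notin> Exs n N G x"
  shows "x j = 0"
  using assms unfolding Exs_def Iset_def by auto

lemma subdiff_12_eq_0_in_nonzero_blk:
  assumes "in_subdiff_12 N G z u" "t \<in> {1..N}" "\<exists>k'\<in>blk G t. z k' \<noteq> 0"
    and "k \<in> blk G t" "z k = 0"
  shows "u k = 0"
  using assms unfolding in_subdiff_12_def by auto

lemma blk_coord_notin_Exs_if_notin_ELs:
  assumes "t \<in> {1..N}" "k \<in> blk G t" "w t \<noteq> 0"
    and "k \<in> {1..pdim N G} - ELs n N G w x"
  shows "blk_coord G t k \<notin> Exs n N G x"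
  using assms Lop_on_blk[OF assms(1,2), of w "cproj (Exs n N G x) (\<lambda>_. 1)"]
  by (auto simp: ELs_def cproj_def)

theorem lemmaA3:
  fixes n N :: nat and G :: "nat \<Rightarrow> nat set" and w :: "nat \<Rightarrow> real"
    and x u :: "nat \<Rightarrow> real"
  assumes "\<forall>i\<in>{1..N}. G i \<noteq> {} \<and> G i \<subseteq> {1..n}"
    and "(\<Union>i\<in>{1..N}. G i) = {1..n}"
    and "\<forall>i\<in>{1..N}. w i > 0"
    and "in_subdiff_12 N G (Lop N G w x) u"
  shows "cproj ({1..pdim N G} - ELs n N G w x) (cproj (Ezs N G x) u) = (\<lambda>_. 0)"
proof
  fix k
  show "cproj ({1..pdim N G} - ELs n N G w x) (cproj (Ezs N G x) u) k = 0"
  proof (cases "k \<in> {1..pdim N G} - ELs n N G w x \<and> k \<in> Ezs N G x")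
    case False
    then show ?thesis unfolding cproj_def by auto
  next
    case True
    then obtain t where t: "t \<in> Iset N G x" "k \<in> blk G t" unfolding Ezs_def by auto
    then have tN: "t \<in> {1..N}" unfolding Iset_def by auto
    have G_t: "G t \<subseteq> {1..n}" and w_t: "w t \<noteq> 0" using assms(1,3) tN by fastforce+
    then have fin: "finite (G t)" using finite_subset by blast
    have "blk_coord G t k \<notin> Exs n N G x"
      using blk_coord_notin_Exs_if_notin_ELs[OF tN t(2), of w] w_t True by blast
    then have "x (blk_coord G t k) = 0"
      using eq_0_outside_Exs blk_coord_mem[of G t, OF fin t(2)] G_t by blast
    then have "Lop N G w x k = 0" using Lop_on_blk[OF tN t(2)] by simp
    then have "u k = 0"
      using subdiff_12_eq_0_in_nonzero_blk[OF assms(4) tN _ t(2)]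
        Lop_blk_nonzero_if_active[of t N G x w, OF t(1) fin w_t] by blast
    then show ?thesis unfolding cproj_def by simp
  qed
qed

end
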